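(* Let $H$ be a reduced double-well type potential, $\beta>0$, and $\mu_\beta$ its Gibbs measure. Then \begin{enumerate} \item $\mu_\beta[01]=\mu_\beta[10]$; \item $\frac{\mu_\beta[0^n1]}{\mu_\beta[01]}=\Big[\sum_{k\ge n}\lambda_\beta^{-k}e^{-\beta H_k^1}\Big]F_\beta^0(\lambda_\beta)$ for $n\ge1$, and $\frac{\mu_\beta[0]}{\mu_\beta[01]}=\frac{\tilde F_\beta^1(\lambda_\beta)}{F_\beta^1(\lambda_\beta)}$; \item $\frac{\mu_\beta[1^n0]}{\mu_\beta[10]}=\Big[\sum_{k\ge n}\lambda_\beta^{-k}e^{-\beta H_k^0}\Big]F_\beta^1(\lambda_\beta)$ for $n\ge1$, and $\frac{\mu_\beta[1]}{\mu_\beta[10]}=\frac{\tilde F_\beta^0(\lambda_\beta)}{F_\beta^0(\lambda_\beta)}$; \item $\frac{\mu_\beta[01^n0]}{\mu_\beta[10]}=\frac{e^{-\beta H_n^0}F_\beta^1(\lambda_\beta)}{\lambda_\beta^n}$ and $\frac{\mu_\beta[10^n1]}{\mu_\beta[01]}=\frac{e^{-\beta H_n^1}F_\beta^0(\lambda_\beta)}{\lambda_\beta^n}$; \item $\frac{\mu_\beta[0]}{\mu_\beta[1]}=\frac{F_\beta^0(\lambda_\beta)}{F_\beta^1(\lambda_\beta)}\cdot\frac{\tilde F_\beta^1(\lambda_\beta)}{\tilde F_\beta^0(\lambda_\beta)}$. \end{enumerate}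
   Context: $\Sigma:=\{0,1\}^{\mathbb N}$, $\sigma$ the left shift. A reduced double-well type potential is a continuous nonnegative $H:\Sigma\to\mathbb R$ with summable variation such that $H=0$ on $[00]\cup[11]$, $H=H_n^0>0$ on $[01^n0]$, $H=H_n^1>0$ on $[10^n1]$ ($n\ge1$), and $\sum_{k\ge1}\sup_{n\ge0}|H_k^i-H_{k+n}^i|<\infty$ ($i=0,1$). $\mathcal L_\beta[\Phi](x)=e^{-\beta H(0x)}\Phi(0x)+e^{-\beta H(1x)}\Phi(1x)$; $\Phi_\beta$ the unique positive continuous eigenfunction with $\max\Phi_\beta=1$, $\lambda_\beta$ its eigenvalue, $\nu_\beta$ the unique probability with $\mathcal L_\beta^*\nu_\beta=\lambda_\beta\nu_\beta$; Gibbs measure $\mu_\beta:=\Phi_\beta\nu_\beta/\int\Phi_\beta d\nu_\beta$. $F_\beta^i(\lambda):=\sum_{k\ge1}\lambda^{-k}e^{-\beta H_k^i}$, $\tilde F_\beta^i(\lambda):=\sum_{k\ge1}k\lambda^{-k}e^{-\beta H_k^i}$ ($i=0,1$). *)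

theory Defs
  imports "HOL-Analysis.Analysis" "HOL-Probability.Probability"
begin

text \<open>The full shift on two symbols. Symbol 0 is encoded as False, symbol 1 as True.\<close>
type_synonym sigma = "nat \<Rightarrow> bool"

definition SigmaT :: "sigma topology" where
  "SigmaT = product_topology (\<lambda>_. discrete_topology UNIV) UNIV"

definition SigmaM :: "sigma measure" where
  "SigmaM = (\<Pi>\<^sub>M i\<in>(UNIV::nat set). count_space (UNIV::bool set))"

definition cyl :: "bool list \<Rightarrow> sigma set" where
  "cyl w = {x. \<forall>i<length w. x i = w ! i}"

definition var :: "(sigma \<Rightarrow> real) \<Rightarrow> nat \<Rightarrow> real" where
  "var H n = (SUP p \<in> {(x, y). \<forall>i<n. x i = y i}. \<bar>H (fst p) - H (snd p)\<bar>)"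

definition prep :: "bool \<Rightarrow> sigma \<Rightarrow> sigma" where
  "prep a x = case_nat a x"

definition transfer :: "real \<Rightarrow> (sigma \<Rightarrow> real) \<Rightarrow> (sigma \<Rightarrow> real) \<Rightarrow> sigma \<Rightarrow> real" where
  "transfer \<beta> H \<Phi> x =
     exp (- \<beta> * H (prep False x)) * \<Phi> (prep False x)
   + exp (- \<beta> * H (prep True x)) * \<Phi> (prep True x)"

text \<open>Reduced double-well type potential; H0 n = H_n^0 (value on [0 1^n 0]),
  H1 n = H_n^1 (value on [1 0^n 1]), n \<ge> 1.\<close>
definition reduced_double_well :: "(sigma \<Rightarrow> real) \<Rightarrow> (nat \<Rightarrow> real) \<Rightarrow> (nat \<Rightarrow> real) \<Rightarrow> bool" where
  "reduced_double_well H H0 H1 \<longleftrightarrow>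
     continuous_map SigmaT euclideanreal H \<and>
     (\<forall>x. 0 \<le> H x) \<and>
     summable (var H) \<and>
     (\<forall>x. x 0 = x 1 \<longrightarrow> H x = 0) \<and>
     (\<forall>n\<ge>1. 0 < H0 n \<and> (\<forall>x\<in>cyl ([False] @ replicate n True @ [False]). H x = H0 n)) \<and>
     (\<forall>n\<ge>1. 0 < H1 n \<and> (\<forall>x\<in>cyl ([True] @ replicate n False @ [True]). H x = H1 n)) \<and>
     summable (\<lambda>k. SUP n. \<bar>H0 (Suc k) - H0 (Suc k + n)\<bar>) \<and>
     summable (\<lambda>k. SUP n. \<bar>H1 (Suc k) - H1 (Suc k + n)\<bar>)"

definition Fsum :: "real \<Rightarrow> (nat \<Rightarrow> real) \<Rightarrow> real \<Rightarrow> real" where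
  "Fsum \<beta> Hi lam = (\<Sum>k. exp (- \<beta> * Hi (Suc k)) / lam ^ Suc k)"

definition Ftilde :: "real \<Rightarrow> (nat \<Rightarrow> real) \<Rightarrow> real \<Rightarrow> real" where
  "Ftilde \<beta> Hi lam = (\<Sum>k. real (Suc k) * exp (- \<beta> * Hi (Suc k)) / lam ^ Suc k)"

definition Ftail :: "real \<Rightarrow> (nat \<Rightarrow> real) \<Rightarrow> real \<Rightarrow> nat \<Rightarrow> real" where
  "Ftail \<beta> Hi lam n = (\<Sum>k. exp (- \<beta> * Hi (k + n)) / lam ^ (k + n))"

definition gibbs :: "sigma measure \<Rightarrow> (sigma \<Rightarrow> real) \<Rightarrow> sigma measure" where
  "gibbs \<nu> \<Phi> = density \<nu> (\<lambda>x. ennreal (\<Phi> x / (\<integral>y. \<Phi> y \<partial>\<nu>)))"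

end

theory Submission
  imports Defs
begin

text \<open>
  The potential vanishes inside a run of equal symbols and only records the length of a run
  when the run is left. Hence the eigenvalue equation attaches identical weights to the
  preimages of two points of a common run cylinder \<open>[a\<^sup>m \<not>a]\<close>, and a contraction argument
  (uniform continuity and positivity of \<open>\<Phi>\<close>) shows that \<open>\<Phi>\<close> is constant there, say \<open>V\<^sub>a(m)\<close>.
  The eigenvalue equation becomes \<open>\<lambda> V\<^sub>a(m) = V\<^sub>a(m+1) + e\<^sup>-\<^sup>\<beta>\<^sup>H\<^sup>a\<^sub>m V\<^sub>\<not>\<^sub>a(1)\<close>, whose
  bounded solution expresses \<open>V\<^sub>a(n)/\<lambda>\<^sup>n\<^sup>-\<^sup>1\<close> as the tail \<open>\<Sum>\<^sub>k\<^sub>\<ge>\<^sub>n \<lambda>\<^sup>-\<^sup>k e\<^sup>-\<^sup>\<beta>\<^sup>H\<^sup>a\<^sub>k\<close> times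
  \<open>V\<^sub>\<not>\<^sub>a(1)\<close>; for \<open>n = 1\<close> this is \<open>V\<^sub>a(1) = F\<^sup>a(\<lambda>) V\<^sub>\<not>\<^sub>a(1)\<close>. Dually, the eigenmeasure satisfies
  \<open>\<lambda> \<nu>[a w] = e\<^sup>-\<^sup>\<beta>\<^sup>c \<nu>[w]\<close> whenever \<open>H = c\<close> on \<open>[a w]\<close>, so \<open>\<nu>[a\<^sup>n \<not>a] = \<lambda>\<^sup>1\<^sup>-\<^sup>n \<nu>[a \<not>a]\<close>.
  Multiplying the two gives every \<open>\<mu>[a\<^sup>n \<not>a]\<close> and \<open>\<mu>[\<not>a a\<^sup>n \<not>a]\<close> as a multiple of \<open>\<mu>[a \<not>a]\<close>;
  summing over \<open>n\<close> gives \<open>\<mu>[a]\<close>, and \<open>\<mu>[01] = \<mu>[10]\<close> is the shift invariance of \<open>\<mu>\<close>.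
\<close>
section \<open>The shift space\<close>

instance bool :: second_countable_topology
proof
  show "\<exists>B::bool set set. countable B \<and> open = generate_topology B"
    by (intro exI[of _ UNIV])
       (auto simp: fun_eq_iff Topological_Spaces.open_discrete intro: generate_topology.Basis)
qed

lemma euclidean_bool: "(euclidean :: bool topology) = discrete_topology UNIV"
  by (simp add: topology_eq open_openin[symmetric] Topological_Spaces.open_discrete)

lemma SigmaT_euclidean: "SigmaT = euclidean"
  unfolding SigmaT_def euclidean_bool[symmetric] by (rule euclidean_product_topology)

lemma continuous_map_SigmaT_iff: "continuous_map SigmaT euclideanreal f \<longleftrightarrow> continuous_on UNIV f"
  by (simp add: SigmaT_euclidean)

lemma sets_SigmaM: "sets SigmaM = sets (borel :: sigma measure)"
proof -
  have "sets (borel :: bool measure) = sets (count_space UNIV)"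
    by (auto simp: sets_borel intro: sigma_sets.Basic Topological_Spaces.open_discrete)
  then have "sets SigmaM = sets (\<Pi>\<^sub>M i\<in>(UNIV::nat set). (borel :: bool measure))"
    unfolding SigmaM_def by (intro sets_PiM_cong) auto
  also have "\<dots> = sets borel" by (rule sets_PiM_equal_borel)
  finally show ?thesis .
qed

lemma compact_UNIV_sigma: "compact (UNIV :: sigma set)"
proof -
  have "compact_space SigmaT"
    unfolding SigmaT_def compact_space_product_topology
    by (simp add: compact_space_discrete_topology)
  then show ?thesis unfolding SigmaT_euclidean compact_space_def by simp
qed

lemma open_prefix_set: "open {x::sigma. \<forall>i<N. x i = z i}"
proof -
  have "open {x::sigma. \<forall>i\<in>{..<N}. x (id i) \<in> {z i}}"
    by (rule product_topology_basis') (auto simp: Topological_Spaces.open_discrete)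
  then show ?thesis unfolding Ball_def lessThan_iff id_apply singleton_iff .
qed

lemma open_contains_prefix_set:
  assumes "open (S :: sigma set)" "z \<in> S"
  obtains N where "{x. \<forall>i<N. x i = z i} \<subseteq> S"
proof -
  have "openin (product_topology (\<lambda>_. discrete_topology UNIV) UNIV) S"
    using assms(1) by (simp add: SigmaT_euclidean[unfolded SigmaT_def])
  from product_topology_open_contains_basis[OF this assms(2)]
  obtain X where z: "z \<in> (\<Pi>\<^sub>E i\<in>UNIV. X i)"
    and fin: "finite {i. X i \<noteq> topspace (discrete_topology UNIV)}"
    and sub: "(\<Pi>\<^sub>E i\<in>UNIV. X i) \<subseteq> S"
    by blast
  obtain N where N: "{i. X i \<noteq> UNIV} \<subseteq> {..<N}"
    using finite_nat_bounded fin unfolding topspace_discrete_topology by blast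
  have "{x. \<forall>i<N. x i = z i} \<subseteq> (\<Pi>\<^sub>E i\<in>UNIV. X i)"
  proof
    fix x assume x: "x \<in> {x. \<forall>i<N. x i = z i}"
    have "x i \<in> X i" for i
    proof (cases "X i = UNIV")
      case True
      then show ?thesis by (metis UNIV_I)
    next
      case False
      with N have "i < N" by blast
      with x have "x i = z i" by simp
      with PiE_mem[OF z UNIV_I] show ?thesis by simp
    qed
    then show "x \<in> (\<Pi>\<^sub>E i\<in>UNIV. X i)" by (simp add: PiE_UNIV_domain)
  qed
  then show ?thesis using sub by (intro that) (rule subset_trans)
qed

lemma uniformly_continuous_sigma:
  fixes f :: "sigma \<Rightarrow> 'a::metric_space"
  assumes f: "continuous_on UNIV f" and e: "e > 0"
  obtains N where "\<And>u v. \<forall>i<N. u i = v i \<Longrightarrow> dist (f u) (f v) < e"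
proof -
  have "\<forall>z. \<exists>N. \<forall>x. (\<forall>i<N. x i = z i) \<longrightarrow> dist (f x) (f z) < e/2"
  proof
    fix z
    have "open (f -` ball (f z) (e/2))" by (rule open_vimage[OF open_ball f])
    moreover have "z \<in> f -` ball (f z) (e/2)" using e by simp
    ultimately obtain N where N: "{x. \<forall>i<N. x i = z i} \<subseteq> f -` ball (f z) (e/2)"
      by (rule open_contains_prefix_set)
    then have "\<forall>x. (\<forall>i<N. x i = z i) \<longrightarrow> dist (f x) (f z) < e/2"
    proof (intro allI impI)
      fix x assume "\<forall>i<N. x i = z i"
      with N have "f x \<in> ball (f z) (e/2)" by blast
      then show "dist (f x) (f z) < e/2" by (simp add: dist_commute)
    qed
    then show "\<exists>N. \<forall>x. (\<forall>i<N. x i = z i) \<longrightarrow> dist (f x) (f z) < e/2" ..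
  qed
  from choice[OF this]
  obtain N where N: "\<forall>z x. (\<forall>i<N z. x i = z i) \<longrightarrow> dist (f x) (f z) < e/2" ..
  have "UNIV \<subseteq> (\<Union>z\<in>UNIV. {x. \<forall>i<N z. x i = z i})"
  proof
    fix x :: sigma
    show "x \<in> (\<Union>z\<in>UNIV. {y. \<forall>i<N z. y i = z i})" by (rule UN_I[of x]) simp_all
  qed
  then obtain Z where "Z \<subseteq> UNIV" "finite Z" and Z: "UNIV \<subseteq> (\<Union>z\<in>Z. {x. \<forall>i<N z. x i = z i})"
    by (rule compactE_image[OF compact_UNIV_sigma open_prefix_set])
  show ?thesis
  proof
    fix u v :: sigma assume uv: "\<forall>i<Max (N ` Z). u i = v i"
    have "u \<in> (\<Union>z\<in>Z. {x. \<forall>i<N z. x i = z i})" using Z by (rule subsetD) (rule UNIV_I)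
    then obtain z where z: "z \<in> Z" "\<forall>i<N z. u i = z i" by (rule UN_E) simp
    have "N z \<le> Max (N ` Z)" using \<open>finite Z\<close> z(1) by simp
    then have "\<forall>i<N z. v i = z i" using uv z(2) by auto
    then have "dist (f v) (f z) < e/2" by (rule N[THEN spec, THEN spec, THEN mp])
    moreover have "dist (f u) (f z) < e/2" using z(2) by (rule N[THEN spec, THEN spec, THEN mp])
    ultimately show "dist (f u) (f v) < e" by (rule dist_triangle_half_l[rotated])
  qed
qed

lemma continuous_on_sigma_pos_lower_bound:
  fixes f :: "sigma \<Rightarrow> real"
  assumes "continuous_on UNIV f" "\<And>x. 0 < f x"
  obtains c where "0 < c" "\<And>x. c \<le> f x"
proof -
  have "compact (f ` UNIV)"
    by (rule compact_continuous_image[OF assms(1) compact_UNIV_sigma])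
  then obtain x where "\<forall>y\<in>f ` UNIV. f x \<le> y"
    using compact_attains_inf[of "f ` UNIV"] by blast
  then show ?thesis using that assms(2) by blast
qed

section \<open>Tail sums of the series F\<close>

lemma Fsum_eq_Ftail_1: "Fsum \<beta> h lam = Ftail \<beta> h lam 1"
  unfolding Fsum_def Ftail_def by simp

lemma exp_neg_div_power_le:
  fixes \<beta> t lam :: real
  assumes "0 \<le> \<beta>" "0 \<le> t" "0 < lam"
  shows "exp (- \<beta> * t) / lam ^ m \<le> (1 / lam) ^ m"
proof -
  have "exp (- \<beta> * t) \<le> 1" using assms(1,2) by simp
  then show ?thesis using assms(3) by (simp add: power_one_over divide_right_mono)
qed

context
  fixes \<beta> lam :: real and h :: "nat \<Rightarrow> real"
  assumes beta: "0 \<le> \<beta>" and lam: "1 < lam" and h_nonneg: "\<And>m. 1 \<le> m \<Longrightarrow> 0 \<le> h m"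
begin

lemma Ftail_term_le:
  assumes "1 \<le> n"
  shows "norm (exp (- \<beta> * h (k + n)) / lam ^ (k + n)) \<le> (1 / lam) ^ n * (1 / lam) ^ k"
proof -
  have "exp (- \<beta> * h (k + n)) / lam ^ (k + n) \<le> (1 / lam) ^ (k + n)"
    using assms lam by (intro exp_neg_div_power_le beta h_nonneg) auto
  then show ?thesis using lam by (simp add: power_add mult.commute)
qed

lemma summable_Ftail_terms:
  assumes "1 \<le> n"
  shows "summable (\<lambda>k. exp (- \<beta> * h (k + n)) / lam ^ (k + n))"
proof (rule summable_comparison_test')
  show "summable (\<lambda>k. (1 / lam) ^ n * (1 / lam) ^ k)"
    using lam by (intro summable_mult summable_geometric) simp
qed (rule Ftail_term_le[OF assms])

lemma Ftail_Suc:
  assumes "1 \<le> n"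
  shows "Ftail \<beta> h lam n = exp (- \<beta> * h n) / lam ^ n + Ftail \<beta> h lam (Suc n)"
  using suminf_split_head[OF summable_Ftail_terms[OF assms]] unfolding Ftail_def by simp

lemma Ftail_nonneg:
  assumes "1 \<le> n"
  shows "0 \<le> Ftail \<beta> h lam n"
  unfolding Ftail_def using lam by (intro suminf_nonneg summable_Ftail_terms assms) simp

lemma Ftail_pos:
  assumes "1 \<le> n"
  shows "0 < Ftail \<beta> h lam n"
  using Ftail_Suc[OF assms] Ftail_nonneg[of "Suc n"] lam by (simp add: add_pos_nonneg)

lemma Ftail_le_geometric:
  assumes "1 \<le> n"
  shows "Ftail \<beta> h lam n \<le> (1 / lam) ^ n * (lam / (lam - 1))"
proof -
  have "1 / (1 - 1 / lam) = lam / (lam - 1)" using lam by (simp add: field_simps)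
  then have "(\<lambda>k. (1 / lam) ^ n * (1 / lam) ^ k) sums ((1 / lam) ^ n * (lam / (lam - 1)))"
    using lam by (metis geometric_sums sums_mult abs_of_pos divide_less_eq_1_pos
        divide_pos_pos real_norm_def zero_less_one less_trans)
  moreover have "exp (- \<beta> * h (k + n)) / lam ^ (k + n) \<le> (1 / lam) ^ n * (1 / lam) ^ k" for k
    using Ftail_term_le[OF assms, of k] lam by simp
  ultimately show ?thesis
    unfolding Ftail_def by (intro sums_le[OF _ summable_sums[OF summable_Ftail_terms[OF assms]]])
qed

lemma sum_Ftail_lessThan:
  "(\<Sum>k<N. Ftail \<beta> h lam (Suc k))
     = (\<Sum>k<N. real (Suc k) * exp (- \<beta> * h (Suc k)) / lam ^ Suc k) + real N * Ftail \<beta> h lam (Suc N)"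
proof (induction N)
  case (Suc N)
  have "Ftail \<beta> h lam (Suc N)
      = exp (- \<beta> * h (Suc N)) / lam ^ Suc N + Ftail \<beta> h lam (Suc (Suc N))"
    by (rule Ftail_Suc) simp
  with Suc.IH show ?case by (simp add: algebra_simps add_divide_distrib)
qed simp

text \<open>Summation by parts; the boundary term \<open>N \<cdot> Ftail (N + 1)\<close> vanishes because the
  tails decay geometrically.\<close>
lemma Ftilde_sums_Ftail: "(\<lambda>k. Ftail \<beta> h lam (Suc k)) sums Ftilde \<beta> h lam"
proof -
  define C where "C = lam / (lam - 1)"
  have q: "norm (1 / lam) < 1" using lam by simp
  have tail_le: "Ftail \<beta> h lam (Suc k) \<le> C / lam * (1 / lam) ^ k" for k
    using Ftail_le_geometric[of "Suc k"] unfolding C_def by (simp add: field_simps)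
  have summable: "summable (\<lambda>k. Ftail \<beta> h lam (Suc k))"
  proof (rule summable_comparison_test')
    show "summable (\<lambda>k. C / lam * (1 / lam) ^ k)" using q by (intro summable_mult summable_geometric)
    show "norm (Ftail \<beta> h lam (Suc k)) \<le> C / lam * (1 / lam) ^ k" for k
      using tail_le[of k] Ftail_nonneg[of "Suc k"] by simp
  qed
  have boundary: "(\<lambda>N. real N * Ftail \<beta> h lam (Suc N)) \<longlonglongrightarrow> 0"
  proof (rule tendsto_sandwich[of "\<lambda>_. 0" _ _ "\<lambda>N. C / lam * (real N * (1 / lam) ^ N)"])
    show "\<forall>\<^sub>F N in sequentially. 0 \<le> real N * Ftail \<beta> h lam (Suc N)"
      using Ftail_nonneg by simp
    show "\<forall>\<^sub>F N in sequentially. real N * Ftail \<beta> h lam (Suc N) \<le> C / lam * (real N * (1 / lam) ^ N)"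
    proof (intro always_eventually allI)
      fix N
      have "real N * Ftail \<beta> h lam (Suc N) \<le> real N * (C / lam * (1 / lam) ^ N)"
        using tail_le[of N] by (rule mult_left_mono) simp
      then show "real N * Ftail \<beta> h lam (Suc N) \<le> C / lam * (real N * (1 / lam) ^ N)"
        by (simp add: ac_simps)
    qed
    show "(\<lambda>N. C / lam * (real N * (1 / lam) ^ N)) \<longlonglongrightarrow> 0"
      using powser_times_n_limit_0[OF q] by (intro tendsto_mult_right_zero) simp
  qed simp
  have "(\<lambda>N. (\<Sum>k<N. Ftail \<beta> h lam (Suc k)) - real N * Ftail \<beta> h lam (Suc N))
      \<longlonglongrightarrow> (\<Sum>k. Ftail \<beta> h lam (Suc k)) - 0"
    by (intro tendsto_diff summable_LIMSEQ summable boundary)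
  then have "(\<lambda>k. real (Suc k) * exp (- \<beta> * h (Suc k)) / lam ^ Suc k) sums (\<Sum>k. Ftail \<beta> h lam (Suc k))"
    by (simp add: sums_def sum_Ftail_lessThan)
  then have "(\<Sum>k. Ftail \<beta> h lam (Suc k)) = Ftilde \<beta> h lam"
    unfolding Ftilde_def by (rule sums_unique)
  with summable show ?thesis by (metis summable_sums)
qed

lemma Ftilde_pos: "0 < Ftilde \<beta> h lam"
  unfolding sums_unique[OF Ftilde_sums_Ftail]
  by (rule suminf_pos2[OF sums_summable[OF Ftilde_sums_Ftail]]) (auto intro: Ftail_nonneg Ftail_pos)

end

section \<open>Cylinders and runs\<close>

lemma cyl_Nil: "cyl [] = UNIV"
  unfolding cyl_def by simp

lemma cyl_snoc: "cyl (w @ [a]) = cyl w \<inter> {x. x (length w) = a}"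
  unfolding cyl_def by (auto simp: nth_append less_Suc_eq)

lemma cyl_append_subset: "cyl (v @ u) \<subseteq> cyl v"
  unfolding cyl_def by (auto simp: nth_append)

lemma cyl_Cons_head: "x \<in> cyl (b # w) \<Longrightarrow> x 0 = b"
  unfolding cyl_def by auto

lemma prep_in_cyl_Cons: "prep b x \<in> cyl (c # w) \<longleftrightarrow> b = c \<and> x \<in> cyl w"
proof -
  have "(\<forall>i<Suc (length w). P i) \<longleftrightarrow> P 0 \<and> (\<forall>i<length w. P (Suc i))" for P
    using less_Suc_eq_0_disj by auto
  then show ?thesis unfolding cyl_def prep_def by auto
qed

lemma indicator_cyl_split:
  "(indicator (cyl w) x :: real) = indicator (cyl (w @ [False])) x + indicator (cyl (w @ [True])) x"
  by (cases "x (length w)") (auto simp: cyl_snoc indicator_def)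

lemma continuous_on_indicator_cyl: "continuous_on UNIV (indicator (cyl w) :: sigma \<Rightarrow> real)"
proof (induction w rule: rev_induct)
  case Nil
  show ?case by (simp add: cyl_Nil)
next
  case (snoc a w)
  have "continuous_on UNIV (\<lambda>x::sigma. if x (length w) = a then 1 else (0::real))"
    by (rule continuous_on_compose2[of UNIV _ UNIV])
       (auto intro: continuous_on_product_coordinates)
  with snoc.IH have "continuous_on UNIV
      (\<lambda>x::sigma. indicator (cyl w) x * (if x (length w) = a then 1 else (0::real)))"
    by (rule continuous_on_mult)
  moreover have "indicator (cyl (w @ [a]))
      = (\<lambda>x::sigma. indicator (cyl w) x * (if x (length w) = a then 1 else (0::real)))"
    by (rule ext) (simp add: cyl_snoc indicator_def)
  ultimately show ?case by simp
qed

definition run_cyl :: "bool \<Rightarrow> nat \<Rightarrow> sigma set" where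
  "run_cyl a m = cyl (replicate m a @ [\<not> a])"

lemma run_point_in_run_cyl: "(\<lambda>i. if i < m then a else \<not> a) \<in> run_cyl a m"
  unfolding run_cyl_def cyl_def by (auto simp: nth_append less_Suc_eq)

lemma run_cyl_head: "1 \<le> m \<Longrightarrow> x \<in> run_cyl a m \<Longrightarrow> x 0 = a"
  unfolding run_cyl_def cyl_def by (cases m) auto

lemma prep_run_cyl_stay: "x \<in> run_cyl a m \<Longrightarrow> prep a x \<in> run_cyl a (Suc m)"
  unfolding run_cyl_def by (simp add: prep_in_cyl_Cons)

lemma prep_run_cyl_leave: "1 \<le> m \<Longrightarrow> x \<in> run_cyl a m \<Longrightarrow> prep (\<not> a) x \<in> run_cyl (\<not> a) 1"
  unfolding run_cyl_def using prep_in_cyl_Cons[of "\<not> a" x "\<not> a" "[a]"]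
  by (cases m) (auto simp: cyl_def)

definition same_run :: "sigma \<Rightarrow> sigma \<Rightarrow> bool" where
  "same_run u v \<longleftrightarrow> (\<exists>a m. 1 \<le> m \<and> u \<in> run_cyl a m \<and> v \<in> run_cyl a m)"

lemma same_run_prep:
  assumes "same_run u v"
  shows "same_run (prep b u) (prep b v)"
proof -
  obtain a m where am: "1 \<le> m" "u \<in> run_cyl a m" "v \<in> run_cyl a m"
    using assms unfolding same_run_def by blast
  show ?thesis
  proof (cases "b = a")
    case True
    then show ?thesis unfolding same_run_def using am prep_run_cyl_stay
      by (intro exI[of _ a] exI[of _ "Suc m"]) auto
  next
    case False
    then have "b = (\<not> a)" by simp
    then show ?thesis unfolding same_run_def using am prep_run_cyl_leave
      by (intro exI[of _ "\<not> a"] exI[of _ 1]) auto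
  qed
qed

lemma prefix_agree_prep:
  "\<forall>i<n. u i = v i \<Longrightarrow> \<forall>i<Suc n. prep b u i = prep b v i"
  by (auto simp: prep_def less_Suc_eq_0_disj)

section \<open>The eigenfunction of a reduced double-well potential\<close>

locale double_well_eigendata =
  fixes H :: "sigma \<Rightarrow> real" and H0 H1 :: "nat \<Rightarrow> real"
    and \<beta> lam :: real and \<Phi> :: "sigma \<Rightarrow> real" and \<nu> :: "sigma measure"
  assumes potential: "reduced_double_well H H0 H1"
    and beta_nonneg: "0 \<le> \<beta>"
    and Phi_cont: "continuous_on UNIV \<Phi>"
    and Phi_pos: "\<And>x. 0 < \<Phi> x"
    and Phi_le_1: "\<And>x. \<Phi> x \<le> 1"
    and Phi_eigen: "\<And>x. transfer \<beta> H \<Phi> x = lam * \<Phi> x"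
    and nu_prob: "prob_space \<nu>"
    and sets_nu: "sets \<nu> = sets SigmaM"
    and nu_eigen: "\<And>f. continuous_on UNIV f \<Longrightarrow>
                     (\<integral>x. transfer \<beta> H f x \<partial>\<nu>) = lam * (\<integral>x. f x \<partial>\<nu>)"
begin

text \<open>\<open>Hrun a m\<close> is the energy paid for leaving a run of \<open>m\<close> symbols \<open>a\<close>; as \<open>True\<close> encodes the
  symbol 1, \<open>H0\<close> belongs to runs of \<open>True\<close>.\<close>
definition Hrun :: "bool \<Rightarrow> nat \<Rightarrow> real" where
  "Hrun a = (if a then H0 else H1)"

lemma H_prep_stay: "x 0 = a \<Longrightarrow> H (prep a x) = 0"
  using potential unfolding reduced_double_well_def by (auto simp: prep_def)

lemma H_prep_leave:
  assumes "1 \<le> m" "x \<in> run_cyl a m"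
  shows "H (prep (\<not> a) x) = Hrun a m"
proof -
  have "prep (\<not> a) x \<in> cyl ([\<not> a] @ replicate m a @ [\<not> a])"
    using assms(2) unfolding run_cyl_def by (simp add: prep_in_cyl_Cons)
  then show ?thesis
    using potential assms(1) unfolding reduced_double_well_def Hrun_def by (cases a) auto
qed

lemma H_prep_same_run:
  assumes "same_run u v"
  shows "H (prep b u) = H (prep b v)"
proof -
  obtain a m where am: "1 \<le> m" "u \<in> run_cyl a m" "v \<in> run_cyl a m"
    using assms unfolding same_run_def by blast
  show ?thesis
  proof (cases "b = a")
    case True
    then show ?thesis
      using H_prep_stay[of u a, OF run_cyl_head[OF am(1,2)]]
        H_prep_stay[of v a, OF run_cyl_head[OF am(1,3)]] by simp
  next
    case False
    then have "b = (\<not> a)" by simp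
    then show ?thesis using H_prep_leave[OF am(1,2)] H_prep_leave[OF am(1,3)] by simp
  qed
qed

lemma Hrun_nonneg: "1 \<le> m \<Longrightarrow> 0 \<le> Hrun a m"
  using potential unfolding reduced_double_well_def Hrun_def by (auto intro: less_imp_le)

lemma eigen_prep:
  "lam * \<Phi> x = exp (- \<beta> * H (prep a x)) * \<Phi> (prep a x)
     + exp (- \<beta> * H (prep (\<not> a) x)) * \<Phi> (prep (\<not> a) x)"
  using Phi_eigen[of x] unfolding transfer_def by (cases a) auto

lemma lam_gt_1: "1 < lam"
proof -
  define z :: sigma where "z = (\<lambda>_. False)"
  have "prep False z = z" by (auto simp: z_def prep_def fun_eq_iff split: nat.split)
  moreover have "H (prep False z) = 0" by (rule H_prep_stay) (simp add: z_def)
  ultimately have "lam * \<Phi> z = \<Phi> z + exp (- \<beta> * H (prep True z)) * \<Phi> (prep True z)"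
    using eigen_prep[of z False] by simp
  then have "1 * \<Phi> z < lam * \<Phi> z" using Phi_pos[of "prep True z"] by simp
  then show ?thesis using Phi_pos[of z] by (meson mult_less_cancel_right_pos)
qed

text \<open>At \<open>u\<close> and \<open>v\<close> the eigenvalue equation carries the same weights, so a relative gap \<open>R\<close>
  between \<open>\<Phi> u\<close> and \<open>\<Phi> v\<close> survives for at least one pair of preimages.\<close>
lemma same_run_gap_prep:
  assumes uv: "same_run u v" and gap: "R * \<Phi> u \<le> \<bar>\<Phi> u - \<Phi> v\<bar>"
  obtains b where "R * \<Phi> (prep b u) \<le> \<bar>\<Phi> (prep b u) - \<Phi> (prep b v)\<bar>"
proof (rule ccontr)
  assume "\<not> thesis"
  then have lt: "\<bar>\<Phi> (prep b u) - \<Phi> (prep b v)\<bar> < R * \<Phi> (prep b u)" for b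
    using that by (meson not_le)
  define w where "w b = exp (- \<beta> * H (prep b u))" for b
  have w_pos: "0 < w b" for b unfolding w_def by simp
  have eu: "lam * \<Phi> u = w False * \<Phi> (prep False u) + w True * \<Phi> (prep True u)"
    using eigen_prep[of u False] unfolding w_def by simp
  have ev: "lam * \<Phi> v = w False * \<Phi> (prep False v) + w True * \<Phi> (prep True v)"
    using eigen_prep[of v False] H_prep_same_run[OF uv] unfolding w_def by simp
  have "lam * \<bar>\<Phi> u - \<Phi> v\<bar> = \<bar>lam * \<Phi> u - lam * \<Phi> v\<bar>"
    using lam_gt_1 by (simp add: right_diff_distrib[symmetric] abs_mult)
  also have "\<dots> = \<bar>w False * (\<Phi> (prep False u) - \<Phi> (prep False v))
      + w True * (\<Phi> (prep True u) - \<Phi> (prep True v))\<bar>"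
    unfolding eu ev by (simp add: algebra_simps)
  also have "\<dots> \<le> w False * \<bar>\<Phi> (prep False u) - \<Phi> (prep False v)\<bar>
      + w True * \<bar>\<Phi> (prep True u) - \<Phi> (prep True v)\<bar>"
    using w_pos by (intro order_trans[OF abs_triangle_ineq]) (simp add: abs_mult abs_of_pos)
  also have "\<dots> < w False * (R * \<Phi> (prep False u)) + w True * (R * \<Phi> (prep True u))"
    by (intro add_strict_mono mult_strict_left_mono lt w_pos)
  also have "\<dots> = R * (lam * \<Phi> u)"
    unfolding eu by (simp add: algebra_simps)
  finally have "lam * \<bar>\<Phi> u - \<Phi> v\<bar> < lam * (R * \<Phi> u)"
    by (simp add: ac_simps)
  then have "\<bar>\<Phi> u - \<Phi> v\<bar> < R * \<Phi> u"
    using lam_gt_1 by simp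
  with gap show False by simp
qed

lemma same_run_gap_prefix:
  assumes "same_run u v" "R * \<Phi> u \<le> \<bar>\<Phi> u - \<Phi> v\<bar>"
  shows "\<exists>u' v'. same_run u' v' \<and> (\<forall>i<n. u' i = v' i) \<and> R * \<Phi> u' \<le> \<bar>\<Phi> u' - \<Phi> v'\<bar>"
proof (induction n)
  case 0
  show ?case using assms by blast
next
  case (Suc n)
  then obtain u' v' where uv: "same_run u' v'" "\<forall>i<n. u' i = v' i"
    "R * \<Phi> u' \<le> \<bar>\<Phi> u' - \<Phi> v'\<bar>"
    by blast
  obtain b where "R * \<Phi> (prep b u') \<le> \<bar>\<Phi> (prep b u') - \<Phi> (prep b v')\<bar>"
    using same_run_gap_prep[OF uv(1,3)] .
  then show ?case
    using same_run_prep[OF uv(1)] prefix_agree_prep[OF uv(2)]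
    by (intro exI[of _ "prep b u'"] exI[of _ "prep b v'"]) simp
qed

text \<open>A relative gap between \<open>\<Phi> x\<close> and \<open>\<Phi> y\<close> would reappear between points agreeing on
  arbitrarily long prefixes, against uniform continuity and \<open>\<Phi> \<ge> c > 0\<close>.\<close>
lemma Phi_same_run:
  assumes "same_run x y"
  shows "\<Phi> x = \<Phi> y"
proof (rule ccontr)
  assume "\<Phi> x \<noteq> \<Phi> y"
  define R where "R = \<bar>\<Phi> x - \<Phi> y\<bar> / \<Phi> x"
  have R: "0 < R" "R * \<Phi> x \<le> \<bar>\<Phi> x - \<Phi> y\<bar>"
    using \<open>\<Phi> x \<noteq> \<Phi> y\<close> Phi_pos[of x] unfolding R_def by auto
  obtain c where c: "0 < c" "\<And>x. c \<le> \<Phi> x"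
    using continuous_on_sigma_pos_lower_bound[OF Phi_cont Phi_pos] by blast
  obtain N where N: "\<And>u v. \<forall>i<N. u i = v i \<Longrightarrow> dist (\<Phi> u) (\<Phi> v) < R * c"
    using uniformly_continuous_sigma[OF Phi_cont mult_pos_pos[OF R(1) c(1)]] by blast
  obtain u v where uv: "\<forall>i<N. u i = v i" "R * \<Phi> u \<le> \<bar>\<Phi> u - \<Phi> v\<bar>"
    using same_run_gap_prefix[OF assms R(2)] by blast
  have "\<bar>\<Phi> u - \<Phi> v\<bar> < R * c" using N[OF uv(1)] by (simp add: dist_real_def)
  moreover have "R * c \<le> R * \<Phi> u" using R(1) c(2)[of u] by simp
  ultimately show False using uv(2) by linarith
qed

definition Phi_run :: "bool \<Rightarrow> nat \<Rightarrow> real" where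
  "Phi_run a m = \<Phi> (\<lambda>i. if i < m then a else \<not> a)"

lemma Phi_on_run_cyl: "1 \<le> m \<Longrightarrow> x \<in> run_cyl a m \<Longrightarrow> \<Phi> x = Phi_run a m"
  using Phi_same_run[of x "\<lambda>i. if i < m then a else \<not> a"] run_point_in_run_cyl
  unfolding Phi_run_def same_run_def by blast

lemma Phi_run_pos: "0 < Phi_run a m"
  unfolding Phi_run_def by (rule Phi_pos)

lemma Phi_run_le_1: "Phi_run a m \<le> 1"
  unfolding Phi_run_def by (rule Phi_le_1)

lemma Phi_run_Suc:
  assumes "1 \<le> m"
  shows "lam * Phi_run a m = Phi_run a (Suc m) + exp (- \<beta> * Hrun a m) * Phi_run (\<not> a) 1"
proof -
  define x where "x = (\<lambda>i. if i < m then a else \<not> a)"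
  have x: "x \<in> run_cyl a m" unfolding x_def by (rule run_point_in_run_cyl)
  have "lam * Phi_run a m = exp (- \<beta> * H (prep a x)) * \<Phi> (prep a x)
      + exp (- \<beta> * H (prep (\<not> a) x)) * \<Phi> (prep (\<not> a) x)"
    unfolding Phi_run_def x_def[symmetric] by (rule eigen_prep)
  moreover have "H (prep a x) = 0" by (rule H_prep_stay[of x, OF run_cyl_head[OF assms x]])
  moreover have "H (prep (\<not> a) x) = Hrun a m" by (rule H_prep_leave[OF assms x])
  moreover have "\<Phi> (prep a x) = Phi_run a (Suc m)"
    by (rule Phi_on_run_cyl[OF _ prep_run_cyl_stay[OF x]]) simp
  moreover have "\<Phi> (prep (\<not> a) x) = Phi_run (\<not> a) 1"
    by (rule Phi_on_run_cyl[OF _ prep_run_cyl_leave[OF assms x]]) simp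
  ultimately show ?thesis by simp
qed

text \<open>Telescoping the recursion \<open>Phi_run_Suc\<close>; the remainder vanishes since \<open>\<Phi> \<le> 1 < \<lambda>\<close>.\<close>
lemma Phi_run_eq_Ftail:
  "Phi_run a (Suc j) / lam ^ j = Ftail \<beta> (Hrun a) lam (Suc j) * Phi_run (\<not> a) 1"
proof -
  define g where "g k = Phi_run a (Suc (k + j)) / lam ^ (k + j)" for k
  have "g \<longlonglongrightarrow> 0"
  proof (rule tendsto_sandwich[of "\<lambda>_. 0" _ _ "\<lambda>k. (1 / lam) ^ (k + j)"])
    show "\<forall>\<^sub>F k in sequentially. 0 \<le> g k"
      unfolding g_def using Phi_run_pos lam_gt_1 by (auto intro!: always_eventually less_imp_le)
    show "\<forall>\<^sub>F k in sequentially. g k \<le> (1 / lam) ^ (k + j)"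
      unfolding g_def using Phi_run_le_1 lam_gt_1
      by (intro always_eventually allI) (simp add: power_one_over divide_right_mono)
    have "(\<lambda>k. (1 / lam) ^ k) \<longlonglongrightarrow> 0" using lam_gt_1 by (intro LIMSEQ_realpow_zero) auto
    then show "(\<lambda>k. (1 / lam) ^ (k + j)) \<longlonglongrightarrow> 0" by (rule LIMSEQ_ignore_initial_segment)
  qed simp
  then have "(\<lambda>k. g k - g (Suc k)) sums g 0"
    using telescope_sums' by fastforce
  moreover have "g k - g (Suc k)
      = exp (- \<beta> * Hrun a (k + Suc j)) / lam ^ (k + Suc j) * Phi_run (\<not> a) 1" for k
  proof -
    have "Phi_run a (Suc (Suc (k + j)))
        = lam * Phi_run a (Suc (k + j)) - exp (- \<beta> * Hrun a (Suc (k + j))) * Phi_run (\<not> a) 1"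
      using Phi_run_Suc[of "Suc (k + j)" a] by simp
    then show ?thesis unfolding g_def using lam_gt_1 by (simp add: field_simps)
  qed
  moreover have "(\<lambda>k. exp (- \<beta> * Hrun a (k + Suc j)) / lam ^ (k + Suc j) * Phi_run (\<not> a) 1)
      sums (Ftail \<beta> (Hrun a) lam (Suc j) * Phi_run (\<not> a) 1)"
    unfolding Ftail_def
    by (intro sums_mult2 summable_sums summable_Ftail_terms beta_nonneg lam_gt_1 Hrun_nonneg) simp_all
  ultimately have "g 0 = Ftail \<beta> (Hrun a) lam (Suc j) * Phi_run (\<not> a) 1"
    by (simp add: sums_unique2)
  then show ?thesis unfolding g_def by simp
qed

lemma Phi_run_1: "Phi_run a 1 = Fsum \<beta> (Hrun a) lam * Phi_run (\<not> a) 1"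
  using Phi_run_eq_Ftail[of a 0] by (simp add: Fsum_eq_Ftail_1)

lemma Fsum_Hrun_pos: "0 < Fsum \<beta> (Hrun a) lam"
  unfolding Fsum_eq_Ftail_1 by (intro Ftail_pos beta_nonneg lam_gt_1 Hrun_nonneg) simp_all

lemma Ftilde_Hrun_pos: "0 < Ftilde \<beta> (Hrun a) lam"
  by (intro Ftilde_pos beta_nonneg lam_gt_1 Hrun_nonneg)

section \<open>Cylinder masses of the eigenmeasure and the Gibbs measure\<close>

lemma space_nu: "space \<nu> = UNIV"
  using sets_eq_imp_space_eq[OF sets_nu] unfolding SigmaM_def by (simp add: space_PiM)

lemma borel_measurable_continuous_sigma:
  fixes f :: "sigma \<Rightarrow> real"
  assumes "continuous_on UNIV f"
  shows "f \<in> borel_measurable \<nu>"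
proof -
  have "f \<in> borel_measurable borel" using assms by (rule borel_measurable_continuous_onI)
  moreover have "sets \<nu> = sets (borel :: sigma measure)" using sets_nu sets_SigmaM by simp
  ultimately show ?thesis using measurable_cong_sets[of \<nu> borel borel borel] by simp
qed

lemma sets_cyl: "cyl w \<in> sets \<nu>"
  using borel_measurable_continuous_sigma[OF continuous_on_indicator_cyl] space_nu
  by (simp add: borel_measurable_indicator_iff)

lemma integrable_continuous_sigma:
  fixes f :: "sigma \<Rightarrow> real"
  assumes "continuous_on UNIV f" "\<And>x. \<bar>f x\<bar> \<le> B"
  shows "integrable \<nu> f"
proof -
  interpret prob_space \<nu> by (rule nu_prob)
  show ?thesis
    by (rule integrable_const_bound[where B = B])
       (use assms borel_measurable_continuous_sigma in auto)
qed

definition nu_cyl :: "bool list \<Rightarrow> real" where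
  "nu_cyl w = measure \<nu> (cyl w)"

definition Phi_mass :: "bool list \<Rightarrow> real" where
  "Phi_mass w = (\<integral>x. indicator (cyl w) x * \<Phi> x \<partial>\<nu>)"

lemma continuous_on_indicator_cyl_Phi: "continuous_on UNIV (\<lambda>x. indicator (cyl w) x * \<Phi> x)"
  by (intro continuous_on_mult continuous_on_indicator_cyl Phi_cont)

lemma integrable_indicator_cyl_Phi: "integrable \<nu> (\<lambda>x. indicator (cyl w) x * \<Phi> x)"
  by (rule integrable_continuous_sigma[OF continuous_on_indicator_cyl_Phi, where B = 1])
     (use Phi_pos Phi_le_1 in \<open>simp add: indicator_def abs_le_iff less_imp_le\<close>)

lemma integrable_indicator_cyl: "integrable \<nu> (indicator (cyl w) :: sigma \<Rightarrow> real)"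
  by (rule integrable_continuous_sigma[OF continuous_on_indicator_cyl, where B = 1])
     (simp add: indicator_def)

lemma nu_cyl_integral: "nu_cyl w = (\<integral>x. indicator (cyl w) x \<partial>\<nu>)"
  unfolding nu_cyl_def using space_nu by simp

lemma Phi_mass_nonneg: "0 \<le> Phi_mass w"
  unfolding Phi_mass_def
  by (rule Bochner_Integration.integral_nonneg) (simp add: indicator_def Phi_pos less_imp_le)

lemma Phi_mass_Nil_pos: "0 < Phi_mass []"
proof -
  interpret prob_space \<nu> by (rule nu_prob)
  obtain c where c: "0 < c" "\<And>x. c \<le> \<Phi> x"
    using continuous_on_sigma_pos_lower_bound[OF Phi_cont Phi_pos] by blast
  have "(\<integral>x. c \<partial>\<nu>) \<le> Phi_mass []"
    unfolding Phi_mass_def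
    by (rule Bochner_Integration.integral_mono[OF _ integrable_indicator_cyl_Phi])
       (simp_all add: cyl_Nil c(2))
  then show ?thesis using c(1) by (simp add: prob_space)
qed

lemma measure_gibbs_cyl: "measure (gibbs \<nu> \<Phi>) (cyl w) = Phi_mass w / Phi_mass []"
proof -
  define Z where "Z = Phi_mass []"
  have Z: "(\<integral>y. \<Phi> y \<partial>\<nu>) = Z" unfolding Z_def Phi_mass_def by (simp add: cyl_Nil)
  have Z_pos: "0 < Z" unfolding Z_def by (rule Phi_mass_Nil_pos)
  have nonneg: "0 \<le> indicator (cyl w) x * \<Phi> x / Z" for x
    using Phi_pos[of x] Z_pos by (simp add: indicator_def less_imp_le)
  have "(\<lambda>x. ennreal (\<Phi> x / Z)) \<in> borel_measurable \<nu>"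
    using borel_measurable_continuous_sigma[OF Phi_cont] by measurable
  then have "emeasure (gibbs \<nu> \<Phi>) (cyl w) = (\<integral>\<^sup>+ x. ennreal (\<Phi> x / Z) * indicator (cyl w) x \<partial>\<nu>)"
    unfolding gibbs_def Z by (rule emeasure_density[OF _ sets_cyl])
  also have "\<dots> = (\<integral>\<^sup>+ x. ennreal (indicator (cyl w) x * \<Phi> x / Z) \<partial>\<nu>)"
    by (rule nn_integral_cong) (simp add: indicator_def)
  also have "\<dots> = ennreal (\<integral>x. indicator (cyl w) x * \<Phi> x / Z \<partial>\<nu>)"
    using integrable_indicator_cyl_Phi nonneg by (intro nn_integral_eq_integral integrable_divide) auto
  also have "\<dots> = ennreal (Phi_mass w / Z)"
    unfolding Phi_mass_def by simp
  finally show ?thesis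
    unfolding measure_def Z_def using Phi_mass_nonneg Phi_mass_Nil_pos by simp
qed

lemma nu_cyl_Cons:
  assumes "\<forall>x\<in>cyl w. H (prep a x) = c"
  shows "lam * nu_cyl (a # w) = exp (- \<beta> * c) * nu_cyl w"
proof -
  have "transfer \<beta> H (indicator (cyl (a # w))) = (\<lambda>x. exp (- \<beta> * c) * indicator (cyl w) x)"
  proof
    fix x
    show "transfer \<beta> H (indicator (cyl (a # w))) x = exp (- \<beta> * c) * indicator (cyl w) x"
      unfolding transfer_def using prep_in_cyl_Cons[of False x a w] prep_in_cyl_Cons[of True x a w] assms
      by (cases a; cases "x \<in> cyl w") (auto simp: indicator_def)
  qed
  then show ?thesis
    using nu_eigen[OF continuous_on_indicator_cyl[of "a # w"]] by (simp add: nu_cyl_integral)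
qed

text \<open>Shift invariance of \<open>\<Phi> \<nu>\<close>: the eigenvalue equation of \<open>\<Phi>\<close> integrated against \<open>\<nu>\<close>.\<close>
lemma Phi_mass_Cons_sum: "Phi_mass (False # w) + Phi_mass (True # w) = Phi_mass w"
proof -
  define f where "f x = (indicator (cyl (False # w)) x + indicator (cyl (True # w)) x) * \<Phi> x" for x
  have "continuous_on UNIV f"
    unfolding f_def by (intro continuous_on_mult continuous_on_add continuous_on_indicator_cyl Phi_cont)
  moreover have "transfer \<beta> H f = (\<lambda>x. lam * (indicator (cyl w) x * \<Phi> x))"
  proof
    fix x
    show "transfer \<beta> H f x = lam * (indicator (cyl w) x * \<Phi> x)"
      unfolding transfer_def f_def using prep_in_cyl_Cons[of _ x _ w] eigen_prep[of x False]
      by (cases "x \<in> cyl w") (auto simp: indicator_def)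
  qed
  ultimately have "lam * Phi_mass w = lam * (\<integral>x. f x \<partial>\<nu>)"
    using nu_eigen[of f] unfolding Phi_mass_def by simp
  moreover have "(\<integral>x. f x \<partial>\<nu>) = Phi_mass (False # w) + Phi_mass (True # w)"
    unfolding f_def Phi_mass_def distrib_right
    by (rule Bochner_Integration.integral_add[OF integrable_indicator_cyl_Phi integrable_indicator_cyl_Phi])
  ultimately show ?thesis using lam_gt_1 by simp
qed

lemma Phi_mass_snoc_sum: "Phi_mass (w @ [False]) + Phi_mass (w @ [True]) = Phi_mass w"
proof -
  have "Phi_mass w = (\<integral>x. indicator (cyl (w @ [False])) x * \<Phi> x
      + indicator (cyl (w @ [True])) x * \<Phi> x \<partial>\<nu>)"
    unfolding Phi_mass_def by (simp add: indicator_cyl_split[of w] distrib_right)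
  also have "\<dots> = Phi_mass (w @ [False]) + Phi_mass (w @ [True])"
    unfolding Phi_mass_def by (rule Bochner_Integration.integral_add[OF integrable_indicator_cyl_Phi integrable_indicator_cyl_Phi])
  finally show ?thesis by simp
qed

lemma nu_cyl_snoc_sum: "nu_cyl (w @ [False]) + nu_cyl (w @ [True]) = nu_cyl w"
proof -
  have "nu_cyl w = (\<integral>x. indicator (cyl (w @ [False])) x + indicator (cyl (w @ [True])) x \<partial>\<nu>)"
    unfolding nu_cyl_integral by (rule Bochner_Integration.integral_cong[OF refl]) (rule indicator_cyl_split)
  also have "\<dots> = nu_cyl (w @ [False]) + nu_cyl (w @ [True])"
    unfolding nu_cyl_integral by (rule Bochner_Integration.integral_add[OF integrable_indicator_cyl integrable_indicator_cyl])
  finally show ?thesis by simp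
qed

lemma nu_cyl_Nil: "nu_cyl [] = 1"
proof -
  interpret prob_space \<nu> by (rule nu_prob)
  show ?thesis unfolding nu_cyl_def cyl_Nil using space_nu prob_space by simp
qed

lemma nu_cyl_mono: "cyl v \<subseteq> cyl w \<Longrightarrow> nu_cyl v \<le> nu_cyl w"
proof -
  interpret prob_space \<nu> by (rule nu_prob)
  show "cyl v \<subseteq> cyl w \<Longrightarrow> nu_cyl v \<le> nu_cyl w"
    unfolding nu_cyl_def by (intro finite_measure_mono sets_cyl)
qed

lemma Phi_mass_on_run_cyl:
  assumes "1 \<le> m" "cyl w \<subseteq> run_cyl a m"
  shows "Phi_mass w = Phi_run a m * nu_cyl w"
proof -
  have "indicator (cyl w) x * \<Phi> x = Phi_run a m * indicator (cyl w) x" for x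
    using Phi_on_run_cyl[OF assms(1), of x] assms(2) by (cases "x \<in> cyl w") auto
  then have "Phi_mass w = (\<integral>x. Phi_run a m * indicator (cyl w) x \<partial>\<nu>)"
    unfolding Phi_mass_def by (intro Bochner_Integration.integral_cong) simp_all
  then show ?thesis unfolding nu_cyl_integral by simp
qed

lemma nu_cyl_stay: "lam * nu_cyl (a # a # w) = nu_cyl (a # w)"
  using nu_cyl_Cons[of "a # w" a 0] H_prep_stay cyl_Cons_head by simp

lemma nu_cyl_replicate_Cons: "lam ^ k * nu_cyl (replicate k a @ a # w) = nu_cyl (a # w)"
proof (induction k)
  case (Suc k)
  have "lam ^ Suc k * nu_cyl (replicate (Suc k) a @ a # w)
      = lam ^ k * (lam * nu_cyl (replicate (Suc k) a @ a # w))"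
    by (simp add: ac_simps)
  also have "lam * nu_cyl (replicate (Suc k) a @ a # w) = nu_cyl (replicate k a @ a # w)"
    using nu_cyl_stay[of a "replicate k a @ w"] by (simp add: replicate_app_Cons_same)
  finally show ?case using Suc.IH by simp
qed simp

lemma nu_cyl_leave:
  assumes "1 \<le> n"
  shows "lam * nu_cyl ((\<not> a) # replicate n a @ [\<not> a]) = exp (- \<beta> * Hrun a n) * nu_cyl (replicate n a @ [\<not> a])"
  using H_prep_leave[OF assms] unfolding run_cyl_def by (intro nu_cyl_Cons) blast

lemma nu_cyl_nonneg: "0 \<le> nu_cyl w"
  unfolding nu_cyl_def by simp

lemma nu_cyl_switch: "nu_cyl [a, \<not> a] = nu_cyl [a] * (1 - 1 / lam)"
proof -
  have "nu_cyl [a, a] + nu_cyl [a, \<not> a] = nu_cyl [a]"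
    using nu_cyl_snoc_sum[of "[a]"] by (cases a) simp_all
  moreover have "nu_cyl [a, a] = nu_cyl [a] / lam"
    using nu_cyl_stay[of a "[]"] lam_gt_1 by (simp add: field_simps)
  ultimately show ?thesis by (simp add: right_diff_distrib)
qed

lemma nu_cyl_switch_pos: "0 < nu_cyl [a, \<not> a]"
proof (rule ccontr)
  have factor_pos: "0 < 1 - 1 / lam" using lam_gt_1 by simp
  assume "\<not> ?thesis"
  then have "nu_cyl [a] * (1 - 1 / lam) \<le> 0" using nu_cyl_switch[of a] by simp
  then have "nu_cyl [a] = 0"
    using factor_pos nu_cyl_nonneg[of "[a]"] by (auto simp: mult_le_0_iff)
  then have "nu_cyl [\<not> a] = 1"
    using nu_cyl_snoc_sum[of "[]"] nu_cyl_Nil by (cases a) simp_all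
  then have "0 < nu_cyl [\<not> a, a]"
    using nu_cyl_switch[of "\<not> a"] factor_pos by simp
  then have "0 < lam * nu_cyl [a, \<not> a, a]"
    using nu_cyl_leave[of 1 "\<not> a"] by simp
  moreover have "nu_cyl [a, \<not> a, a] \<le> nu_cyl [a]"
    using nu_cyl_mono cyl_append_subset[of "[a]" "[\<not> a, a]"] by simp
  ultimately show False using \<open>nu_cyl [a] = 0\<close> lam_gt_1 by (simp add: zero_less_mult_iff)
qed


lemma nu_cyl_run: "nu_cyl (replicate (Suc j) a @ [\<not> a]) = nu_cyl [a, \<not> a] / lam ^ j"
  using nu_cyl_replicate_Cons[of j a "[\<not> a]"] lam_gt_1
  by (simp add: replicate_app_Cons_same field_simps)

lemma Phi_mass_switch: "Phi_mass [a, \<not> a] = Phi_run a 1 * nu_cyl [a, \<not> a]"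
  by (rule Phi_mass_on_run_cyl) (simp_all add: run_cyl_def)

lemma Phi_mass_switch_pos: "0 < Phi_mass [a, \<not> a]"
  unfolding Phi_mass_switch using Phi_run_pos nu_cyl_switch_pos by simp

lemma Phi_mass_switch_sym: "Phi_mass [False, True] = Phi_mass [True, False]"
  using Phi_mass_Cons_sum[of "[False]"] Phi_mass_snoc_sum[of "[False]"] by simp

lemma Phi_mass_run:
  "Phi_mass (replicate (Suc j) a @ [\<not> a])
     = Ftail \<beta> (Hrun a) lam (Suc j) * Phi_run (\<not> a) 1 * nu_cyl [a, \<not> a]"
proof -
  have "Phi_mass (replicate (Suc j) a @ [\<not> a])
      = Phi_run a (Suc j) * nu_cyl (replicate (Suc j) a @ [\<not> a])"
    by (rule Phi_mass_on_run_cyl) (simp_all add: run_cyl_def)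
  also have "\<dots> = Phi_run a (Suc j) / lam ^ j * nu_cyl [a, \<not> a]"
    unfolding nu_cyl_run by simp
  also have "\<dots> = Ftail \<beta> (Hrun a) lam (Suc j) * Phi_run (\<not> a) 1 * nu_cyl [a, \<not> a]"
    by (simp only: Phi_run_eq_Ftail)
  finally show ?thesis .
qed

lemma Phi_mass_excursion:
  "Phi_mass ((\<not> a) # replicate (Suc j) a @ [\<not> a])
     = exp (- \<beta> * Hrun a (Suc j)) / lam ^ Suc j * Phi_run (\<not> a) 1 * nu_cyl [a, \<not> a]"
proof -
  have "cyl ((\<not> a) # replicate (Suc j) a @ [\<not> a]) \<subseteq> run_cyl (\<not> a) 1"
    using cyl_append_subset[of "[\<not> a, a]" "replicate j a @ [\<not> a]"] by (simp add: run_cyl_def)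
  then have "Phi_mass ((\<not> a) # replicate (Suc j) a @ [\<not> a])
      = Phi_run (\<not> a) 1 * nu_cyl ((\<not> a) # replicate (Suc j) a @ [\<not> a])"
    by (intro Phi_mass_on_run_cyl) simp_all
  moreover have "lam * nu_cyl ((\<not> a) # replicate (Suc j) a @ [\<not> a])
      = exp (- \<beta> * Hrun a (Suc j)) * (nu_cyl [a, \<not> a] / lam ^ j)"
    using nu_cyl_leave[of "Suc j" a] unfolding nu_cyl_run by simp
  ultimately show ?thesis using lam_gt_1 by (simp add: field_simps)
qed

lemma Phi_mass_replicate_le: "Phi_mass (replicate (Suc N) a) \<le> nu_cyl [a] / lam ^ N"
proof -
  have "Phi_mass (replicate (Suc N) a) \<le> nu_cyl (replicate (Suc N) a)"
    unfolding Phi_mass_def nu_cyl_integral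
    by (rule Bochner_Integration.integral_mono[OF integrable_indicator_cyl_Phi integrable_indicator_cyl])
       (simp add: indicator_def Phi_le_1)
  also have "nu_cyl (replicate (Suc N) a) = nu_cyl [a] / lam ^ N"
    using nu_cyl_replicate_Cons[of N a "[]"] lam_gt_1
    by (simp add: replicate_app_Cons_same field_simps)
  finally show ?thesis .
qed

lemma Phi_mass_single_split:
  "Phi_mass [a] = (\<Sum>k<N. Phi_mass (replicate (Suc k) a @ [\<not> a])) + Phi_mass (replicate (Suc N) a)"
proof (induction N)
  case (Suc N)
  have "Phi_mass (replicate (Suc N) a)
      = Phi_mass (replicate (Suc N) a @ [\<not> a]) + Phi_mass (replicate (Suc (Suc N)) a)"
    using Phi_mass_snoc_sum[of "replicate (Suc N) a"]
    by (cases a) (simp_all add: replicate_append_same)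
  with Suc.IH show ?case by simp
qed simp

lemma Phi_mass_single:
  "Phi_mass [a] = Ftilde \<beta> (Hrun a) lam * Phi_run (\<not> a) 1 * nu_cyl [a, \<not> a]"
proof -
  define C where "C = Phi_run (\<not> a) 1 * nu_cyl [a, \<not> a]"
  have "(\<lambda>N. Phi_mass (replicate (Suc N) a)) \<longlonglongrightarrow> 0"
  proof (rule tendsto_sandwich[of "\<lambda>_. 0" _ _ "\<lambda>N. nu_cyl [a] * (1 / lam) ^ N"])
    show "\<forall>\<^sub>F N in sequentially. 0 \<le> Phi_mass (replicate (Suc N) a)"
      by (simp add: Phi_mass_nonneg)
    show "\<forall>\<^sub>F N in sequentially. Phi_mass (replicate (Suc N) a) \<le> nu_cyl [a] * (1 / lam) ^ N"
      using Phi_mass_replicate_le by (simp add: power_one_over)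
    show "(\<lambda>N. nu_cyl [a] * (1 / lam) ^ N) \<longlonglongrightarrow> 0"
      using lam_gt_1 by (intro tendsto_mult_right_zero LIMSEQ_realpow_zero) auto
  qed simp
  then have "(\<lambda>N. Phi_mass [a] - Phi_mass (replicate (Suc N) a)) \<longlonglongrightarrow> Phi_mass [a] - 0"
    by (intro tendsto_diff tendsto_const)
  moreover have "Phi_mass [a] - Phi_mass (replicate (Suc N) a)
      = (\<Sum>k<N. Phi_mass (replicate (Suc k) a @ [\<not> a]))" for N
    using Phi_mass_single_split[of a N] by simp
  ultimately have "(\<lambda>k. Phi_mass (replicate (Suc k) a @ [\<not> a])) sums Phi_mass [a]"
    unfolding sums_def by simp
  moreover have "(\<lambda>k. Phi_mass (replicate (Suc k) a @ [\<not> a])) sums (Ftilde \<beta> (Hrun a) lam * C)"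
    unfolding Phi_mass_run C_def mult.assoc
    by (intro sums_mult2 Ftilde_sums_Ftail beta_nonneg lam_gt_1 Hrun_nonneg)
  ultimately show ?thesis unfolding C_def by (simp add: sums_unique2 mult.assoc)
qed

lemma Phi_run_switch_ratio: "Phi_run (\<not> a) 1 / Phi_run a 1 = Fsum \<beta> (Hrun (\<not> a)) lam"
  using Phi_run_1[of "\<not> a"] Phi_run_pos[of a 1] by simp

lemma Phi_mass_run_ratio:
  assumes "1 \<le> n"
  shows "Phi_mass (replicate n a @ [\<not> a]) / Phi_mass [a, \<not> a]
    = Ftail \<beta> (Hrun a) lam n * Fsum \<beta> (Hrun (\<not> a)) lam"
proof -
  obtain j where j: "n = Suc j" using assms by (cases n) auto
  show ?thesis
    unfolding j Phi_mass_run Phi_mass_switch Phi_run_switch_ratio[symmetric]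
    using nu_cyl_switch_pos[of a] by simp
qed

lemma Phi_mass_single_ratio:
  "Phi_mass [a] / Phi_mass [a, \<not> a] = Ftilde \<beta> (Hrun a) lam / Fsum \<beta> (Hrun a) lam"
  unfolding Phi_mass_single Phi_mass_switch Phi_run_1[of a]
  using nu_cyl_switch_pos[of a] Phi_run_pos[of "\<not> a" 1] by simp

lemma Phi_mass_excursion_ratio:
  assumes "1 \<le> n"
  shows "Phi_mass ((\<not> a) # replicate n a @ [\<not> a]) / Phi_mass [a, \<not> a]
    = exp (- \<beta> * Hrun a n) * Fsum \<beta> (Hrun (\<not> a)) lam / lam ^ n"
proof -
  obtain j where j: "n = Suc j" using assms by (cases n) auto
  show ?thesis
    unfolding j Phi_mass_excursion Phi_mass_switch Phi_run_switch_ratio[symmetric]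
    using nu_cyl_switch_pos[of a] by simp
qed

lemma Phi_mass_single_quotient:
  "Phi_mass [False] / Phi_mass [True]
     = (Fsum \<beta> (Hrun True) lam / Fsum \<beta> (Hrun False) lam)
       * (Ftilde \<beta> (Hrun False) lam / Ftilde \<beta> (Hrun True) lam)"
proof -
  define M where "M = Phi_mass [True, False]"
  have "Phi_mass [False] = Ftilde \<beta> (Hrun False) lam / Fsum \<beta> (Hrun False) lam * M"
    using Phi_mass_single_ratio[of False] Phi_mass_switch_pos[of False] Phi_mass_switch_sym
    unfolding M_def by (simp add: divide_eq_eq)
  moreover have "Phi_mass [True] = Ftilde \<beta> (Hrun True) lam / Fsum \<beta> (Hrun True) lam * M"
    using Phi_mass_single_ratio[of True] Phi_mass_switch_pos[of True]
    unfolding M_def by (simp add: divide_eq_eq)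
  ultimately have "Phi_mass [False] / Phi_mass [True]
      = (Ftilde \<beta> (Hrun False) lam / Fsum \<beta> (Hrun False) lam * M)
        / (Ftilde \<beta> (Hrun True) lam / Fsum \<beta> (Hrun True) lam * M)"
    by simp
  also have "\<dots> = (Fsum \<beta> (Hrun True) lam / Fsum \<beta> (Hrun False) lam)
      * (Ftilde \<beta> (Hrun False) lam / Ftilde \<beta> (Hrun True) lam)"
    using Phi_mass_switch_pos[of True] Fsum_Hrun_pos[of True] Fsum_Hrun_pos[of False]
      Ftilde_Hrun_pos[of True] unfolding M_def by (simp add: field_simps)
  finally show ?thesis .
qed

end

theorem corollary3p6:
  fixes H :: "sigma \<Rightarrow> real" and H0 H1 :: "nat \<Rightarrow> real"
    and \<beta> lam :: real and \<Phi> :: "sigma \<Rightarrow> real" and \<nu> :: "sigma measure"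
  assumes pot: "reduced_double_well H H0 H1"
    and beta: "\<beta> > 0"
    and Phi_cont: "continuous_map SigmaT euclideanreal \<Phi>"
    and Phi_pos: "\<forall>x. \<Phi> x > 0"
    and Phi_max: "(\<forall>x. \<Phi> x \<le> 1) \<and> (\<exists>x. \<Phi> x = 1)"
    and Phi_eig: "transfer \<beta> H \<Phi> = (\<lambda>x. lam * \<Phi> x)"
    and nu_prob: "prob_space \<nu>"
    and nu_sets: "sets \<nu> = sets SigmaM"
    and nu_eig: "\<forall>f. continuous_map SigmaT euclideanreal f \<longrightarrow>
                   (\<integral>x. transfer \<beta> H f x \<partial>\<nu>) = lam * (\<integral>x. f x \<partial>\<nu>)"
  shows "let \<mu> = gibbs \<nu> \<Phi>; m = (\<lambda>w. measure \<mu> (cyl w)) in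
     m [False, True] = m [True, False]
   \<and> (\<forall>n\<ge>1. m (replicate n False @ [True]) / m [False, True]
              = Ftail \<beta> H1 lam n * Fsum \<beta> H0 lam)
   \<and> m [False] / m [False, True] = Ftilde \<beta> H1 lam / Fsum \<beta> H1 lam
   \<and> (\<forall>n\<ge>1. m (replicate n True @ [False]) / m [True, False]
              = Ftail \<beta> H0 lam n * Fsum \<beta> H1 lam)
   \<and> m [True] / m [True, False] = Ftilde \<beta> H0 lam / Fsum \<beta> H0 lam
   \<and> (\<forall>n\<ge>1. m ([False] @ replicate n True @ [False]) / m [True, False]
              = exp (- \<beta> * H0 n) * Fsum \<beta> H1 lam / lam ^ n)
   \<and> (\<forall>n\<ge>1. m ([True] @ replicate n False @ [True]) / m [False, True]
              = exp (- \<beta> * H1 n) * Fsum \<beta> H0 lam / lam ^ n)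
   \<and> m [False] / m [True]
       = (Fsum \<beta> H0 lam / Fsum \<beta> H1 lam) * (Ftilde \<beta> H1 lam / Ftilde \<beta> H0 lam)"
proof -
  interpret double_well_eigendata H H0 H1 \<beta> lam \<Phi> \<nu>
    by (intro double_well_eigendata.intro)
       (use pot beta Phi_cont Phi_pos Phi_max Phi_eig nu_prob nu_sets nu_eig in
         \<open>simp_all add: continuous_map_SigmaT_iff\<close>)
  have Hrun: "Hrun True = H0" "Hrun False = H1"
    unfolding Hrun_def by simp_all
  have cancel: "x / Phi_mass [] / (y / Phi_mass []) = x / y" for x y
    using Phi_mass_Nil_pos by simp
  show ?thesis
    unfolding Let_def measure_gibbs_cyl cancel
    using Phi_mass_switch_sym Phi_mass_single_quotient
      Phi_mass_run_ratio[of _ False] Phi_mass_run_ratio[of _ True]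
      Phi_mass_single_ratio[of False] Phi_mass_single_ratio[of True]
      Phi_mass_excursion_ratio[of _ False] Phi_mass_excursion_ratio[of _ True]
    by (simp only: Hrun not_True_eq_False not_False_eq_True append_Cons append_Nil) auto
qed

end
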